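(* Let $G$ be a topological groupoid on the space $X=O_G$ whose underlying groupoid is compatible locally trivial (with respect to an open cover $\{U_{i}\}$ of $X$ and local sections $s_{x,i}\colon U_{i}\rightarrow G_x$ as in the context), and let $W$ be an open subset of $G$ containing all identities $1_x$, $x\in X$. Suppose that every local section $s_{x,i}$ has image in $W$, i.e. $s_{x,i}(U_i)\subseteq W$. Then the monodromy groupoid $M(G,W)$ (a groupoid on $X$) is compatible locally trivial.
   Context: Groupoid conventions: a groupoid $G$ on object set $O_G$ has source and target maps $\alpha,\beta\colon G\rightarrow O_G$, identities $1_x$; the product $ab$ is defined iff $\beta(a)=\alpha(b)$. $G(x,y)$ denotes elements from $x$ to $y$; the star of $x$ is $G_x=\{a\in G\colon\alpha(a)=x\}$. A topological groupoid is a groupoid with topologies on $G$ and $O_G$ making source, target, identity map, inversion and partial multiplication continuous. Compatible locally trivial: Let $X$ be a topological space and $G$ a groupoid on $X$. Suppose $\mathcal U=\{U_i\colon i\in I\}$ is an open cover of $X$ which is also a base for its topology, and for each $i$ and each $x\in U_i$ there is a map (local section about $x$) $s_{x,i}\colon U_i\to G_x$ with $\beta(s_{x,i}(y))=y$ for $y\in U_i$ and $s_{x,i}(x)=1_x$. $G$ is compatible locally trivial if for every $x$ and any two local sections $s_{x,i}, s_{x,j}$ about $x$ there is $V_{ij}\in\mathcal U$ with $x\in V_{ij}\subseteq U_i\cap U_j$ and $s_{x,i}|_{V_{ij}}=s_{x,j}|_{V_{ij}}$. Monodromy groupoid: for a groupoid $G$ and a subset $W\subseteq G$ containing all identities, let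 $F(W)$ be the free groupoid on the graph $W$ (objects $O_G$, an edge $[a]\colon\alpha(a)\to\beta(a)$ for each $a\in W$), and $N$ the normal subgroupoid of $F(W)$ generated by the elements $[a][b][ab]^{-1}$ for all $a,b\in W$ with $\beta(a)=\alpha(b)$ and $ab\in W$. Then $M(G,W)=F(W)/N$, a groupoid on $O_G$; the map $\widetilde\imath\colon W\to M(G,W)$, $a\mapsto$ class of $[a]$, is injective. *)

theory Defs
  imports "HOL-Analysis.Analysis"
begin

text \<open>A groupoid with object set gobj and arrow set garr; source alpha = gsrc,
  target beta = gtgt, identities gid, inversion ginv, and the partial product
  gmul a b defined (meaningfully) iff gtgt a = gsrc b.\<close>

record ('x, 'g) groupoid =
  gobj :: "'x set"
  garr :: "'g set"
  gsrc :: "'g \<Rightarrow> 'x"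
  gtgt :: "'g \<Rightarrow> 'x"
  gid  :: "'x \<Rightarrow> 'g"
  ginv :: "'g \<Rightarrow> 'g"
  gmul :: "'g \<Rightarrow> 'g \<Rightarrow> 'g"

definition is_groupoid :: "('x, 'g, 'm) groupoid_scheme \<Rightarrow> bool" where
  "is_groupoid G \<longleftrightarrow>
     (\<forall>a\<in>garr G. gsrc G a \<in> gobj G \<and> gtgt G a \<in> gobj G) \<and>
     (\<forall>x\<in>gobj G. gid G x \<in> garr G \<and> gsrc G (gid G x) = x \<and> gtgt G (gid G x) = x) \<and>
     (\<forall>a\<in>garr G. \<forall>b\<in>garr G. gtgt G a = gsrc G b \<longrightarrow>
        gmul G a b \<in> garr G \<and> gsrc G (gmul G a b) = gsrc G a \<and> gtgt G (gmul G a b) = gtgt G b) \<and>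
     (\<forall>a\<in>garr G. \<forall>b\<in>garr G. \<forall>c\<in>garr G. gtgt G a = gsrc G b \<and> gtgt G b = gsrc G c \<longrightarrow>
        gmul G (gmul G a b) c = gmul G a (gmul G b c)) \<and>
     (\<forall>a\<in>garr G. gmul G (gid G (gsrc G a)) a = a \<and> gmul G a (gid G (gtgt G a)) = a) \<and>
     (\<forall>a\<in>garr G. ginv G a \<in> garr G \<and> gsrc G (ginv G a) = gtgt G a \<and> gtgt G (ginv G a) = gsrc G a \<and>
        gmul G a (ginv G a) = gid G (gsrc G a) \<and> gmul G (ginv G a) a = gid G (gtgt G a))"

definition topological_groupoid ::
  "'g topology \<Rightarrow> 'x topology \<Rightarrow> ('x, 'g, 'm) groupoid_scheme \<Rightarrow> bool" where
  "topological_groupoid TG TX G \<longleftrightarrow>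
     is_groupoid G \<and> topspace TG = garr G \<and> topspace TX = gobj G \<and>
     continuous_map TG TX (gsrc G) \<and> continuous_map TG TX (gtgt G) \<and>
     continuous_map TX TG (gid G) \<and> continuous_map TG TG (ginv G) \<and>
     continuous_map
       (subtopology (prod_topology TG TG) {(a, b). a \<in> garr G \<and> b \<in> garr G \<and> gtgt G a = gsrc G b})
       TG (\<lambda>(a, b). gmul G a b)"

definition compatible_locally_trivial_wrt ::
  "'x topology \<Rightarrow> ('x, 'g, 'm) groupoid_scheme \<Rightarrow> 'i set \<Rightarrow> ('i \<Rightarrow> 'x set)
     \<Rightarrow> ('x \<Rightarrow> 'i \<Rightarrow> 'x \<Rightarrow> 'g) \<Rightarrow> bool" where
  "compatible_locally_trivial_wrt TX G I U s \<longleftrightarrow>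
     is_groupoid G \<and> gobj G = topspace TX \<and>
     (\<forall>i\<in>I. openin TX (U i)) \<and>
     (\<Union>i\<in>I. U i) = topspace TX \<and>
     (\<forall>V. openin TX V \<longrightarrow> (\<forall>x\<in>V. \<exists>i\<in>I. x \<in> U i \<and> U i \<subseteq> V)) \<and>
     (\<forall>i\<in>I. \<forall>x\<in>U i.
        (\<forall>y\<in>U i. s x i y \<in> garr G \<and> gsrc G (s x i y) = x \<and> gtgt G (s x i y) = y) \<and>
        s x i x = gid G x) \<and>
     (\<forall>x \<in> topspace TX. \<forall>i\<in>I. \<forall>j\<in>I. x \<in> U i \<and> x \<in> U j \<longrightarrow>
        (\<exists>k\<in>I. x \<in> U k \<and> U k \<subseteq> U i \<inter> U j \<and> (\<forall>y\<in>U k. s x i y = s x j y)))"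

text \<open>Elements of the free groupoid F(W) are represented by paths (x, w, y): a word w of
  letters (a, True) = [a] and (a, False) = [a]^{-1}, a in W, composable from x to y
  (the empty word at x being the identity at x). F(W) is the quotient by free reduction;
  M(G,W) = F(W)/N where N is the normal subgroupoid generated by [a][b][ab]^{-1}.
  Concretely, M(G,W) is the quotient of paths by the congruence generated by free
  cancellation and by [a][b] ~ [ab] (for a, b, ab in W composable).\<close>

type_synonym ('x, 'g) wpath = "'x \<times> ('g \<times> bool) list \<times> 'x"

fun wvalid :: "('x, 'g, 'm) groupoid_scheme \<Rightarrow> 'g set \<Rightarrow> 'x \<Rightarrow> ('g \<times> bool) list \<Rightarrow> 'x \<Rightarrow> bool" where
  "wvalid G W x [] y \<longleftrightarrow> x = y \<and> x \<in> gobj G"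
| "wvalid G W x ((a, True) # w) y \<longleftrightarrow> a \<in> W \<and> gsrc G a = x \<and> wvalid G W (gtgt G a) w y"
| "wvalid G W x ((a, False) # w) y \<longleftrightarrow> a \<in> W \<and> gtgt G a = x \<and> wvalid G W (gsrc G a) w y"

definition wpaths :: "('x, 'g, 'm) groupoid_scheme \<Rightarrow> 'g set \<Rightarrow> ('x, 'g) wpath set" where
  "wpaths G W = {(x, w, y). wvalid G W x w y}"

inductive mstep :: "('x, 'g, 'm) groupoid_scheme \<Rightarrow> 'g set \<Rightarrow> ('x, 'g) wpath \<Rightarrow> ('x, 'g) wpath \<Rightarrow> bool"
  for G W where
  cancel: "wvalid G W x (u @ [(a, d), (a, \<not> d)] @ v) y \<Longrightarrow>
             mstep G W (x, u @ [(a, d), (a, \<not> d)] @ v, y) (x, u @ v, y)"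
| compose: "wvalid G W x (u @ [(a, True), (b, True)] @ v) y \<Longrightarrow> gmul G a b \<in> W \<Longrightarrow>
             mstep G W (x, u @ [(a, True), (b, True)] @ v, y) (x, u @ [(gmul G a b, True)] @ v, y)"

definition mequiv :: "('x, 'g, 'm) groupoid_scheme \<Rightarrow> 'g set \<Rightarrow> ('x, 'g) wpath \<Rightarrow> ('x, 'g) wpath \<Rightarrow> bool" where
  "mequiv G W = (\<lambda>p q. mstep G W p q \<or> mstep G W q p)\<^sup>*\<^sup>*"

definition mclass :: "('x, 'g, 'm) groupoid_scheme \<Rightarrow> 'g set \<Rightarrow> ('x, 'g) wpath \<Rightarrow> ('x, 'g) wpath set" where
  "mclass G W p = {q. mequiv G W p q}"

definition mrep :: "('x, 'g) wpath set \<Rightarrow> ('x, 'g) wpath" where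
  "mrep C = (SOME p. p \<in> C)"

fun wrev :: "('g \<times> bool) list \<Rightarrow> ('g \<times> bool) list" where
  "wrev w = rev (map (\<lambda>(a, d). (a, \<not> d)) w)"

definition monodromy ::
  "('x, 'g, 'm) groupoid_scheme \<Rightarrow> 'g set \<Rightarrow> ('x, ('x, 'g) wpath set) groupoid" where
  "monodromy G W =
     \<lparr> gobj = gobj G,
       garr = mclass G W ` wpaths G W,
       gsrc = (\<lambda>C. fst (mrep C)),
       gtgt = (\<lambda>C. snd (snd (mrep C))),
       gid = (\<lambda>x. mclass G W (x, [], x)),
       ginv = (\<lambda>C. case mrep C of (x, w, y) \<Rightarrow> mclass G W (y, wrev w, x)),
       gmul = (\<lambda>C D. case mrep C of (x, w, y) \<Rightarrow> (case mrep D of (y', v, z) \<Rightarrow>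
                  mclass G W (x, w @ v, z))) \<rparr>"

end

theory Submission
  imports Defs
begin

(* Arrows of M(G,W) are classes of composable W-words, composition is concatenation and
   inversion is reversal; both are well defined because the defining congruence is closed
   under extending words on either side, and w followed by its reversal cancels freely.
   The letter map a |-> [a] from W preserves source and target, and sends 1_x to the
   identity because [1_x] ~ [1_x][1_x][1_x]^-1 ~ [1_x 1_x][1_x]^-1 ~ 1. Since every local
   section of G takes values in W, composing the sections with this map gives local
   sections of M(G,W) over the same cover, and compatibility is inherited verbatim. *)

lemma wrev_Nil [simp]: "wrev [] = []"
  by simp

lemma wrev_Cons [simp]: "wrev ((a, d) # w) = wrev w @ [(a, \<not> d)]"
  by simp

declare wrev.simps [simp del]

lemma wrev_wrev [simp]: "wrev (wrev w) = w"
  by (induction w) (auto simp: wrev.simps rev_map)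

lemma wvalid_Cons:
  "wvalid G W x ((a, d) # w) y \<longleftrightarrow> a \<in> W \<and>
     (if d then gsrc G a = x \<and> wvalid G W (gtgt G a) w y
      else gtgt G a = x \<and> wvalid G W (gsrc G a) w y)"
  by (cases d) auto

lemma mequiv_symclp: "mequiv G W = (symclp (mstep G W))\<^sup>*\<^sup>*"
  unfolding mequiv_def symclp_def ..

lemma mequiv_refl [simp]: "mequiv G W p p"
  by (simp add: mequiv_def)

lemma mequiv_sym [sym]: "mequiv G W p q \<Longrightarrow> mequiv G W q p"
  unfolding mequiv_symclp by (rule rtranclp_symclp_sym)

lemma mequiv_trans [trans]: "mequiv G W p q \<Longrightarrow> mequiv G W q r \<Longrightarrow> mequiv G W p r"
  unfolding mequiv_def by (rule rtranclp_trans)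

lemma mstep_imp_mequiv: "mstep G W p q \<Longrightarrow> mequiv G W p q"
  unfolding mequiv_symclp by (simp add: symclpI1 r_into_rtranclp)

lemma mstep_endpoints: "mstep G W p q \<Longrightarrow> fst q = fst p \<and> snd (snd q) = snd (snd p)"
  by (induction rule: mstep.induct) auto

lemma mequiv_endpoints: "mequiv G W p q \<Longrightarrow> fst q = fst p \<and> snd (snd q) = snd (snd p)"
  unfolding mequiv_symclp
proof (induction rule: rtranclp_induct)
  case (step q r)
  then show ?case by (auto elim!: symclpE dest!: mstep_endpoints)
qed simp

lemma mclass_eq: "mequiv G W p q \<Longrightarrow> mclass G W p = mclass G W q"
  unfolding mclass_def using mequiv_sym mequiv_trans by blast

lemma gobj_monodromy [simp]: "gobj (monodromy G W) = gobj G"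
  by (simp add: monodromy_def)

lemma gid_monodromy [simp]: "gid (monodromy G W) x = mclass G W (x, [], x)"
  by (simp add: monodromy_def)

lemma mclass_in_monodromy: "wvalid G W x w y \<Longrightarrow> mclass G W (x, w, y) \<in> garr (monodromy G W)"
  by (auto simp: monodromy_def wpaths_def)

lemma ball_garr_monodromy:
  "(\<forall>C\<in>garr (monodromy G W). P C) \<longleftrightarrow> (\<forall>x w y. wvalid G W x w y \<longrightarrow> P (mclass G W (x, w, y)))"
  by (auto simp: monodromy_def wpaths_def)

definition monodromy_incl :: "('x, 'g, 'm) groupoid_scheme \<Rightarrow> 'g set \<Rightarrow> 'g \<Rightarrow> ('x, 'g) wpath set"
  where "monodromy_incl G W a = mclass G W (gsrc G a, [(a, True)], gtgt G a)"

context
  fixes G :: "('x, 'g, 'm) groupoid_scheme" and W :: "'g set"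
  assumes groupoid: "is_groupoid G" and W_arrows: "W \<subseteq> garr G"
begin

lemma W_endpoints_in_gobj: "a \<in> W \<Longrightarrow> gsrc G a \<in> gobj G \<and> gtgt G a \<in> gobj G"
  using groupoid W_arrows unfolding is_groupoid_def by blast

lemma wvalid_endpoints_in_gobj: "wvalid G W x w y \<Longrightarrow> x \<in> gobj G \<and> y \<in> gobj G"
proof (induction w arbitrary: x)
  case (Cons p w)
  then show ?case
    using W_endpoints_in_gobj by (cases p) (auto simp: wvalid_Cons split: if_splits)
qed simp

lemma wvalid_append:
  "wvalid G W x (u @ v) z \<longleftrightarrow> (\<exists>y. wvalid G W x u y \<and> wvalid G W y v z)"
proof (induction u arbitrary: x)
  case Nil
  then show ?case using wvalid_endpoints_in_gobj by auto
next
  case (Cons p u)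
  then show ?case by (cases p) (auto simp: wvalid_Cons)
qed

lemma wvalid_appendI: "wvalid G W x u y \<Longrightarrow> wvalid G W y v z \<Longrightarrow> wvalid G W x (u @ v) z"
  using wvalid_append by blast

lemma wvalid_wrev: "wvalid G W x w y \<Longrightarrow> wvalid G W y (wrev w) x"
proof (induction w arbitrary: x)
  case (Cons p w)
  then show ?case using wvalid_endpoints_in_gobj W_endpoints_in_gobj
    by (cases p) (auto simp: wvalid_append wvalid_Cons split: if_splits)
qed simp

lemma mstep_wpaths: "mstep G W p q \<Longrightarrow> p \<in> wpaths G W \<and> q \<in> wpaths G W"
proof (induction rule: mstep.induct)
  case (cancel x u a d v y)
  then show ?case by (cases d) (auto simp: wpaths_def wvalid_append)
next
  case (compose x u a b v y)
  then show ?case using groupoid W_arrows unfolding is_groupoid_def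
    by (auto simp: wpaths_def wvalid_append) (metis subsetD)+
qed

lemma mequiv_wpaths: "mequiv G W p q \<Longrightarrow> p \<in> wpaths G W \<Longrightarrow> q \<in> wpaths G W"
  unfolding mequiv_symclp
  by (induction rule: rtranclp_induct) (auto elim: symclpE dest: mstep_wpaths)

lemma mstep_in_context:
  assumes "mstep G W (x, w, y) (x', w', y')" "wvalid G W x0 u x" "wvalid G W y v z"
  shows "mstep G W (x0, u @ w @ v, z) (x0, u @ w' @ v, z)"
  using assms(1)
proof cases
  case (cancel u1 a d v1)
  then have "wvalid G W x0 (u @ w @ v) z"
    using assms(2,3) wvalid_append by blast
  then have "wvalid G W x0 ((u @ u1) @ [(a, d), (a, \<not> d)] @ (v1 @ v)) z"
    using cancel by simp
  from mstep.cancel[OF this] show ?thesis using cancel by simp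
next
  case (compose u1 a b v1)
  then have "wvalid G W x0 (u @ w @ v) z"
    using assms(2,3) wvalid_append by blast
  then have "wvalid G W x0 ((u @ u1) @ [(a, True), (b, True)] @ (v1 @ v)) z"
    using compose by simp
  from mstep.compose[OF this] show ?thesis using compose by simp
qed

lemma mequiv_in_context:
  assumes "mequiv G W (x, w, y) (x', w', y')" "wvalid G W x0 u x" "wvalid G W y v z"
  shows "mequiv G W (x0, u @ w @ v, z) (x0, u @ w' @ v, z)"
  using assms(1) unfolding mequiv_symclp
proof (induction "(x', w', y')" arbitrary: x' w' y' rule: rtranclp_induct)
  case base
  then show ?case by simp
next
  case (step q)
  obtain wq where q: "q = (x, wq, y)"
    using mequiv_endpoints[of G W "(x, w, y)" q] step.hyps(1)
    unfolding mequiv_symclp by (cases q) auto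
  have "symclp (mstep G W) (x0, u @ wq @ v, z) (x0, u @ w' @ v, z)"
    using step.hyps(2) unfolding q
  proof cases
    case base
    then show ?thesis using mstep_in_context assms(2,3) by (blast intro: symclpI1)
  next
    case sym
    then have "mstep G W (x, w', y) (x, wq, y)" using mstep_endpoints by fastforce
    then show ?thesis using mstep_in_context assms(2,3) by (blast intro: symclpI2)
  qed
  with step.hyps(3)[OF q] show ?case by (rule rtranclp.rtrancl_into_rtrancl)
qed

lemma mrep_mclass:
  assumes "wvalid G W x w y"
  obtains w' where "mrep (mclass G W (x, w, y)) = (x, w', y)"
    and "mequiv G W (x, w, y) (x, w', y)" and "wvalid G W x w' y"
proof -
  let ?p = "mrep (mclass G W (x, w, y))"
  have "?p \<in> mclass G W (x, w, y)"
    unfolding mrep_def by (rule someI[of _ "(x, w, y)"]) (simp add: mclass_def)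
  then have eq: "mequiv G W (x, w, y) ?p"
    by (simp add: mclass_def)
  moreover have "?p \<in> wpaths G W"
    using mequiv_wpaths[OF eq] assms by (simp add: wpaths_def)
  ultimately show ?thesis
    using that mequiv_endpoints[OF eq] by (cases ?p) (auto simp: wpaths_def)
qed

lemma gsrc_monodromy: "wvalid G W x w y \<Longrightarrow> gsrc (monodromy G W) (mclass G W (x, w, y)) = x"
  by (auto simp: monodromy_def elim: mrep_mclass)

lemma gtgt_monodromy: "wvalid G W x w y \<Longrightarrow> gtgt (monodromy G W) (mclass G W (x, w, y)) = y"
  by (auto simp: monodromy_def elim: mrep_mclass)

lemma gmul_monodromy:
  assumes "wvalid G W x w y" and "wvalid G W y v z"
  shows "gmul (monodromy G W) (mclass G W (x, w, y)) (mclass G W (y, v, z)) = mclass G W (x, w @ v, z)"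
proof -
  obtain w' where w': "mrep (mclass G W (x, w, y)) = (x, w', y)"
    "mequiv G W (x, w, y) (x, w', y)" "wvalid G W x w' y"
    using mrep_mclass[OF assms(1)] .
  obtain v' where v': "mrep (mclass G W (y, v, z)) = (y, v', z)"
    "mequiv G W (y, v, z) (y, v', z)" "wvalid G W y v' z"
    using mrep_mclass[OF assms(2)] .
  have "mequiv G W (x, w @ v, z) (x, w' @ v, z)"
    using mequiv_in_context[OF w'(2), of x "[]" v z] assms wvalid_endpoints_in_gobj by simp
  also have "mequiv G W (x, w' @ v, z) (x, w' @ v', z)"
    using mequiv_in_context[OF v'(2), of x w' "[]" z] w'(3) assms wvalid_endpoints_in_gobj by simp
  finally show ?thesis
    using w' v' by (simp add: monodromy_def mclass_eq)
qed

lemma mequiv_append_wrev: "wvalid G W x w y \<Longrightarrow> mequiv G W (x, w @ wrev w, x) (x, [], x)"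
proof (induction w arbitrary: x)
  case (Cons p w)
  obtain a d where p: "p = (a, d)"
    by fastforce
  define x' where "x' = (if d then gtgt G a else gsrc G a)"
  have w: "wvalid G W x' w y"
    and letters: "wvalid G W x [(a, d)] x'" "wvalid G W x' [(a, \<not> d)] x"
    using Cons.prems W_endpoints_in_gobj wvalid_endpoints_in_gobj unfolding p x'_def
    by (auto simp: wvalid_Cons split: if_splits)
  have "mequiv G W (x, (a, d) # w @ wrev w @ [(a, \<not> d)], x) (x, [(a, d), (a, \<not> d)], x)"
    using mequiv_in_context[OF Cons.IH[OF w] letters] by simp
  also have "mequiv G W (x, [(a, d), (a, \<not> d)], x) (x, [], x)"
    using mstep.cancel[of G W x "[]" a d "[]" x] letters
      wvalid_append[of x "[(a, d)]" "[(a, \<not> d)]" x]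
    by (auto intro: mstep_imp_mequiv)
  finally show ?case
    using p by simp
qed simp

lemma mclass_append_wrev: "wvalid G W x w y \<Longrightarrow> mclass G W (x, w @ wrev w, x) = mclass G W (x, [], x)"
  by (rule mclass_eq) (rule mequiv_append_wrev)

lemma ginv_monodromy:
  assumes "wvalid G W x w y"
  shows "ginv (monodromy G W) (mclass G W (x, w, y)) = mclass G W (y, wrev w, x)"
proof -
  obtain w' where w': "mrep (mclass G W (x, w, y)) = (x, w', y)"
    "mequiv G W (x, w, y) (x, w', y)" "wvalid G W x w' y"
    using mrep_mclass[OF assms] .
  have rev: "wvalid G W y (wrev w') x" "wvalid G W y (wrev w) x"
    using wvalid_wrev w'(3) assms by auto
  have "mequiv G W (y, wrev w', x) (y, wrev w' @ w @ wrev w, x)"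
    using mequiv_in_context[OF mequiv_append_wrev[OF assms], of y "wrev w'" "[]" x]
      rev wvalid_endpoints_in_gobj
    by (auto intro: mequiv_sym)
  also have "mequiv G W \<dots> (y, wrev w' @ w' @ wrev w, x)"
    using mequiv_in_context[OF w'(2) rev] .
  also have "mequiv G W \<dots> (y, wrev w, x)"
    using mequiv_in_context[OF mequiv_append_wrev[OF rev(1)], of y "[]" "wrev w" x]
      rev wvalid_endpoints_in_gobj
    by simp
  finally show ?thesis
    using w' by (simp add: monodromy_def mclass_eq)
qed

lemma mclass_wrev_append: "wvalid G W x w y \<Longrightarrow> mclass G W (y, wrev w @ w, y) = mclass G W (y, [], y)"
  using mclass_append_wrev[OF wvalid_wrev] by simp

lemma is_groupoid_monodromy: "is_groupoid (monodromy G W)"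
  unfolding is_groupoid_def ball_garr_monodromy
  by (auto simp: gsrc_monodromy gtgt_monodromy gmul_monodromy ginv_monodromy mclass_in_monodromy
      wvalid_appendI wvalid_wrev wvalid_endpoints_in_gobj mclass_append_wrev mclass_wrev_append)

lemma monodromy_incl_arr:
  assumes "a \<in> W"
  shows "monodromy_incl G W a \<in> garr (monodromy G W) \<and>
    gsrc (monodromy G W) (monodromy_incl G W a) = gsrc G a \<and>
    gtgt (monodromy G W) (monodromy_incl G W a) = gtgt G a"
proof -
  have "wvalid G W (gsrc G a) [(a, True)] (gtgt G a)"
    using assms W_endpoints_in_gobj by simp
  then show ?thesis
    by (simp add: monodromy_incl_def mclass_in_monodromy gsrc_monodromy gtgt_monodromy)
qed

lemma monodromy_incl_gid:
  assumes "x \<in> gobj G" and "gid G x \<in> W"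
  shows "monodromy_incl G W (gid G x) = gid (monodromy G W) x"
proof -
  let ?e = "gid G x"
  have e_arr: "?e \<in> garr G" "gsrc G ?e = x" "gtgt G ?e = x"
    using groupoid assms(1) unfolding is_groupoid_def by blast+
  moreover have "\<forall>a\<in>garr G. gmul G (gid G (gsrc G a)) a = a"
    using groupoid unfolding is_groupoid_def by blast
  ultimately have e: "gsrc G ?e = x" "gtgt G ?e = x" "gmul G ?e ?e = ?e"
    by auto
  have "mequiv G W (x, [(?e, True)], x) (x, [(?e, True), (?e, True), (?e, False)], x)"
    using mstep.cancel[of G W x "[(?e, True)]" ?e True "[]" x] e assms
    by (auto intro: mequiv_sym mstep_imp_mequiv)
  also have "mequiv G W \<dots> (x, [(?e, True), (?e, False)], x)"
    using mstep.compose[of G W x "[]" ?e ?e "[(?e, False)]" x] e assms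
    by (auto intro: mstep_imp_mequiv)
  also have "mequiv G W \<dots> (x, [], x)"
    using mstep.cancel[of G W x "[]" ?e True "[]" x] e assms
    by (auto intro: mstep_imp_mequiv)
  finally show ?thesis
    using e by (simp add: monodromy_incl_def mclass_eq)
qed

end

lemma compatible_locally_trivial_wrt_map:
  assumes clt: "compatible_locally_trivial_wrt TX G I U s"
    and H: "is_groupoid H" "gobj H = gobj G"
    and sections: "\<forall>i\<in>I. \<forall>x\<in>U i. s x i ` U i \<subseteq> A"
    and f_arr: "\<And>a. a \<in> A \<Longrightarrow> f a \<in> garr H \<and> gsrc H (f a) = gsrc G a \<and> gtgt H (f a) = gtgt G a"
    and f_gid: "\<And>x. x \<in> gobj G \<Longrightarrow> f (gid G x) = gid H x"
  shows "compatible_locally_trivial_wrt TX H I U (\<lambda>x i y. f (s x i y))"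
proof -
  have G_sections: "\<forall>i\<in>I. \<forall>x\<in>U i.
        (\<forall>y\<in>U i. s x i y \<in> garr G \<and> gsrc G (s x i y) = x \<and> gtgt G (s x i y) = y) \<and>
        s x i x = gid G x"
    and compatible: "\<forall>x\<in>topspace TX. \<forall>i\<in>I. \<forall>j\<in>I. x \<in> U i \<and> x \<in> U j \<longrightarrow>
        (\<exists>k\<in>I. x \<in> U k \<and> U k \<subseteq> U i \<inter> U j \<and> (\<forall>y\<in>U k. s x i y = s x j y))"
    and cover: "(\<Union>i\<in>I. U i) = topspace TX" and obj: "gobj G = topspace TX"
    using clt unfolding compatible_locally_trivial_wrt_def by simp_all
  have "\<forall>i\<in>I. \<forall>x\<in>U i.
        (\<forall>y\<in>U i. f (s x i y) \<in> garr H \<and> gsrc H (f (s x i y)) = x \<and> gtgt H (f (s x i y)) = y) \<and>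
        f (s x i x) = gid H x"
  proof (intro ballI conjI)
    fix i x y assume "i \<in> I" "x \<in> U i" "y \<in> U i"
    then have "s x i y \<in> A" "gsrc G (s x i y) = x" "gtgt G (s x i y) = y"
      using sections G_sections by auto
    then show "f (s x i y) \<in> garr H" "gsrc H (f (s x i y)) = x" "gtgt H (f (s x i y)) = y"
      using f_arr by auto
  next
    fix i x assume "i \<in> I" "x \<in> U i"
    moreover have "x \<in> gobj G"
      using calculation cover obj by blast
    ultimately show "f (s x i x) = gid H x"
      using G_sections f_gid by simp
  qed
  moreover have "\<forall>x\<in>topspace TX. \<forall>i\<in>I. \<forall>j\<in>I. x \<in> U i \<and> x \<in> U j \<longrightarrow>
      (\<exists>k\<in>I. x \<in> U k \<and> U k \<subseteq> U i \<inter> U j \<and> (\<forall>y\<in>U k. f (s x i y) = f (s x j y)))"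
    using compatible by metis
  ultimately show ?thesis
    using clt H obj unfolding compatible_locally_trivial_wrt_def by simp
qed

theorem mainTheorem2:
  fixes TG :: "'g topology" and TX :: "'x topology"
    and G :: "('x, 'g) groupoid"
    and I :: "'i set" and U :: "'i \<Rightarrow> 'x set" and s :: "'x \<Rightarrow> 'i \<Rightarrow> 'x \<Rightarrow> 'g"
    and W :: "'g set"
  assumes "topological_groupoid TG TX G"
    and "compatible_locally_trivial_wrt TX G I U s"
    and "openin TG W"
    and "\<forall>x\<in>gobj G. gid G x \<in> W"
    and "\<forall>i\<in>I. \<forall>x\<in>U i. s x i ` U i \<subseteq> W"
  shows "\<exists>(I' :: 'i set) U' s'. compatible_locally_trivial_wrt TX (monodromy G W) I' U' s'"
proof -
  have groupoid: "is_groupoid G"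
    using assms(1) by (simp add: topological_groupoid_def)
  have W_arrows: "W \<subseteq> garr G"
    using assms(1,3) openin_subset by (force simp: topological_groupoid_def)
  have "compatible_locally_trivial_wrt TX (monodromy G W) I U (\<lambda>x i y. monodromy_incl G W (s x i y))"
  proof (rule compatible_locally_trivial_wrt_map[OF assms(2) _ gobj_monodromy assms(5)])
    show "is_groupoid (monodromy G W)"
      using groupoid W_arrows by (rule is_groupoid_monodromy)
  qed (simp_all add: monodromy_incl_arr[OF groupoid W_arrows]
      monodromy_incl_gid[OF groupoid W_arrows] assms(4))
  then show ?thesis
    by blast
qed

end
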